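(* At every point $R\in V_N$ with $q(R)>0$, the curvature tensor $$S_{pqrs}=C_{tqr}\,C_p{}^t{}_s-C_{tqs}\,C_p{}^t{}_r,\qquad C_p{}^t{}_s=g^{tu}C_{pus},$$ of the Finsleroid metric function is $$S_{pqrs}=S^*\,\frac{h_{pr}h_{qs}-h_{ps}h_{qr}}{K^2}\quad\text{with}\quad S^*=-\frac14g^2 .$$
   Context: Let $N\ge2$, $V_N=\mathbb{R}^N$ with points $R=(R^1,\dots,R^N)$, $Z=R^N$; indices $a,b$ run over $1,\dots,N-1$, indices $p,q,r,s,t,u$ over $1,\dots,N$, repeated indices summed. Fix a symmetric positive-definite matrix $(r_{ab})$, $q(R)=\sqrt{r_{ab}R^aR^b}$. Fix $g\in(-2,2)$, $h=\sqrt{1-g^2/4}$, $G=g/h$. Define $B(g;R)=Z^2+gqZ+q^2$, $A(g;R)=Z+\frac12gq$, $\Phi(g;R)=\arctan(A/(hq))$ for $q>0$ ($\Phi=\pm\pi/2$ if $q=0$, $Z\gtrless0$), $J=e^{\frac12G\Phi}$, and $K(g;R)=\sqrt{B}\,J$. Let $g_{pq}=\frac12\partial^2K^2/\partial R^p\partial R^q$ with inverse $g^{pq}$, $R_p=\frac12\partial K^2/\partial R^p$, $h_{pq}=g_{pq}-R_pR_q/K^2$, and Cartan tensor $C_{pqr}=\frac12\partial g_{pq}/\partial R^r$. *)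

theory Defs
  imports "HOL-Analysis.Analysis"
begin

text \<open>Points of V_N are modelled as functions nat => real; only the coordinates
  1..N are used.  Indices a,b range over {1..<N}, indices p,q,... over {1..N}.
  Z = R N.\<close>

definition fq :: "nat \<Rightarrow> (nat \<Rightarrow> nat \<Rightarrow> real) \<Rightarrow> (nat \<Rightarrow> real) \<Rightarrow> real" where
  "fq N rr R = sqrt (\<Sum>a\<in>{1..<N}. \<Sum>b\<in>{1..<N}. rr a b * R a * R b)"

definition fh :: "real \<Rightarrow> real" where
  "fh g = sqrt (1 - g^2 / 4)"

definition fG :: "real \<Rightarrow> real" where
  "fG g = g / fh g"

definition fB :: "nat \<Rightarrow> (nat \<Rightarrow> nat \<Rightarrow> real) \<Rightarrow> real \<Rightarrow> (nat \<Rightarrow> real) \<Rightarrow> real" where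
  "fB N rr g R = (R N)^2 + g * fq N rr R * R N + (fq N rr R)^2"

definition fA :: "nat \<Rightarrow> (nat \<Rightarrow> nat \<Rightarrow> real) \<Rightarrow> real \<Rightarrow> (nat \<Rightarrow> real) \<Rightarrow> real" where
  "fA N rr g R = R N + g * fq N rr R / 2"

text \<open>At q = 0 the paper sets Phi = pi/2 for Z > 0 and -pi/2 for Z < 0; at the origin
  (q = 0, Z = 0) we take -pi/2 (irrelevant, since B = 0 there).\<close>
definition fPhi :: "nat \<Rightarrow> (nat \<Rightarrow> nat \<Rightarrow> real) \<Rightarrow> real \<Rightarrow> (nat \<Rightarrow> real) \<Rightarrow> real" where
  "fPhi N rr g R =
     (if fq N rr R > 0 then arctan (fA N rr g R / (fh g * fq N rr R))
      else if R N > 0 then pi / 2 else - (pi / 2))"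

definition fJ :: "nat \<Rightarrow> (nat \<Rightarrow> nat \<Rightarrow> real) \<Rightarrow> real \<Rightarrow> (nat \<Rightarrow> real) \<Rightarrow> real" where
  "fJ N rr g R = exp (fG g * fPhi N rr g R / 2)"

definition fK :: "nat \<Rightarrow> (nat \<Rightarrow> nat \<Rightarrow> real) \<Rightarrow> real \<Rightarrow> (nat \<Rightarrow> real) \<Rightarrow> real" where
  "fK N rr g R = sqrt (fB N rr g R) * fJ N rr g R"

definition pd :: "((nat \<Rightarrow> real) \<Rightarrow> real) \<Rightarrow> nat \<Rightarrow> (nat \<Rightarrow> real) \<Rightarrow> real" where
  "pd f p R = deriv (\<lambda>t. f (R(p := R p + t))) 0"

definition fK2 :: "nat \<Rightarrow> (nat \<Rightarrow> nat \<Rightarrow> real) \<Rightarrow> real \<Rightarrow> (nat \<Rightarrow> real) \<Rightarrow> real" where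
  "fK2 N rr g R = (fK N rr g R)^2"

definition gmet :: "nat \<Rightarrow> (nat \<Rightarrow> nat \<Rightarrow> real) \<Rightarrow> real \<Rightarrow> nat \<Rightarrow> nat \<Rightarrow> (nat \<Rightarrow> real) \<Rightarrow> real" where
  "gmet N rr g p q R = pd (\<lambda>X. pd (fK2 N rr g) q X) p R / 2"

definition Rlow :: "nat \<Rightarrow> (nat \<Rightarrow> nat \<Rightarrow> real) \<Rightarrow> real \<Rightarrow> nat \<Rightarrow> (nat \<Rightarrow> real) \<Rightarrow> real" where
  "Rlow N rr g p R = pd (fK2 N rr g) p R / 2"

definition hten :: "nat \<Rightarrow> (nat \<Rightarrow> nat \<Rightarrow> real) \<Rightarrow> real \<Rightarrow> nat \<Rightarrow> nat \<Rightarrow> (nat \<Rightarrow> real) \<Rightarrow> real" where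
  "hten N rr g p q R = gmet N rr g p q R - Rlow N rr g p R * Rlow N rr g q R / (fK N rr g R)^2"

definition Cartan :: "nat \<Rightarrow> (nat \<Rightarrow> nat \<Rightarrow> real) \<Rightarrow> real \<Rightarrow> nat \<Rightarrow> nat \<Rightarrow> nat \<Rightarrow> (nat \<Rightarrow> real) \<Rightarrow> real" where
  "Cartan N rr g p q r R = pd (\<lambda>X. gmet N rr g p q X) r R / 2"

text \<open>Inverse metric g^pq: the inverse matrix of (g_pq)_{p,q in 1..N}
  (entries outside 1..N set to 0 to make it unique).\<close>
definition ginv :: "nat \<Rightarrow> (nat \<Rightarrow> nat \<Rightarrow> real) \<Rightarrow> real \<Rightarrow> (nat \<Rightarrow> real) \<Rightarrow> nat \<Rightarrow> nat \<Rightarrow> real" where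
  "ginv N rr g R = (THE M.
      (\<forall>p\<in>{1..N}. \<forall>s\<in>{1..N}. (\<Sum>q\<in>{1..N}. gmet N rr g p q R * M q s) = (if p = s then 1 else 0))
    \<and> (\<forall>p q. p \<notin> {1..N} \<or> q \<notin> {1..N} \<longrightarrow> M p q = 0))"

definition Cmixed :: "nat \<Rightarrow> (nat \<Rightarrow> nat \<Rightarrow> real) \<Rightarrow> real \<Rightarrow> nat \<Rightarrow> nat \<Rightarrow> nat \<Rightarrow> (nat \<Rightarrow> real) \<Rightarrow> real" where
  "Cmixed N rr g p t s R = (\<Sum>u\<in>{1..N}. ginv N rr g R t u * Cartan N rr g p u s R)"

definition Scurv :: "nat \<Rightarrow> (nat \<Rightarrow> nat \<Rightarrow> real) \<Rightarrow> real \<Rightarrow> nat \<Rightarrow> nat \<Rightarrow> nat \<Rightarrow> nat \<Rightarrow> (nat \<Rightarrow> real) \<Rightarrow> real" where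
  "Scurv N rr g p q r s R =
     (\<Sum>t\<in>{1..N}. Cartan N rr g t q r R * Cmixed N rr g p t s R
                 - Cartan N rr g t q s R * Cmixed N rr g p t r R)"

end

theory Submission
  imports Defs "Jordan_Normal_Form.Determinant"
begin

text \<open>
  Put P = J^2 = exp (G Phi), so that K^2 = P B. Along the coordinate lines one has
  dq = k_p = r_pb R^b / q, dZ = e_p (the last unit vector) and d(G Phi) = g m_p with
  m_p = (q e_p - Z k_p) / B. Differentiating K^2 three times then gives closed forms:
  with rho_pq = r_pq - k_p k_q the angular metric is h_pq = P (rho_pq + B m_p m_q) and
  C_pqr = (g/2) (m_p h_qr + m_q h_pr + m_r h_pq) - (g/2) K^2 m_p m_q m_r.
  Moreover h_pq R^q = 0, m_p R^p = 0, and m^p = g^pq m_q satisfies m^p h_pq = m_q and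
  m^p m_p = 1/K^2. In C_tqr C_p^t_s - C_tqs C_p^t_r for a tensor
  C = alpha (m h + m h + m h) + beta m m m with these contractions, every term involving m
  cancels once alpha + beta m^p m_p = 0, which holds for alpha = g/2, beta = -(g/2) K^2;
  what is left is -alpha^2 (h_pr h_qs - h_ps h_qr) / K^2.
\<close>

lemma sum_mult_delta_right:
  fixes f :: "'a \<Rightarrow> 'b::comm_semiring_1"
  assumes "finite I" "s \<in> I"
  shows "(\<Sum>t\<in>I. f t * (if t = s then 1 else 0)) = f s"
  using assms by (simp add: if_distrib sum.delta' cong: if_cong)

lemma sum_delta_mult_left:
  fixes f :: "'a \<Rightarrow> 'b::comm_semiring_1"
  assumes "finite I" "p \<in> I"
  shows "(\<Sum>j\<in>I. (if p = j then 1 else 0) * f j) = f p"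
proof -
  have "(if p = j then 1 else 0) * f j = (if p = j then f j else 0)" for j by simp
  then show ?thesis using assms by simp
qed

lemma sum_mult_sum_swap:
  fixes a :: "'a \<Rightarrow> 'c::comm_semiring_0" and c :: "'b \<Rightarrow> 'c" and b :: "'a \<Rightarrow> 'b \<Rightarrow> 'c"
  shows "(\<Sum>u\<in>I. a u * (\<Sum>j\<in>J. b u j * c j)) = (\<Sum>j\<in>J. (\<Sum>u\<in>I. a u * b u j) * c j)"
  by (simp add: sum_distrib_left sum_distrib_right mult.assoc sum.swap[of _ J])

lemma sum_diff_scaled_divide:
  fixes f h :: "'a \<Rightarrow> real"
  shows "(\<Sum>t\<in>S. (f t - b * h t) / c) = (sum f S - b * sum h S) / c"
  by (simp only: sum_divide_distrib[symmetric] sum_subtractf sum_distrib_left[symmetric])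

section \<open>Inverse matrices on a finite index set\<close>

lemma left_inverse_apply:
  fixes E G :: "'a \<Rightarrow> 'a \<Rightarrow> real"
  assumes "finite I" "t \<in> I"
    and left: "\<forall>p\<in>I. \<forall>s\<in>I. (\<Sum>q\<in>I. E p q * G q s) = (if p = s then 1 else 0)"
  shows "(\<Sum>u\<in>I. E t u * (\<Sum>j\<in>I. G u j * v j)) = v t"
proof -
  have "(\<Sum>u\<in>I. E t u * (\<Sum>j\<in>I. G u j * v j)) = (\<Sum>j\<in>I. (\<Sum>u\<in>I. E t u * G u j) * v j)"
    by (rule sum_mult_sum_swap)
  also have "\<dots> = (\<Sum>j\<in>I. (if t = j then 1 else 0) * v j)"
    using left \<open>t \<in> I\<close> by (intro sum.cong) auto
  also have "\<dots> = v t" using assms by (simp only: sum_delta_mult_left)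
  finally show ?thesis .
qed

lemma right_inverse_eq_left_inverse:
  fixes E G M :: "'a \<Rightarrow> 'a \<Rightarrow> real"
  assumes "finite I" "p \<in> I" "s \<in> I"
    and left: "\<forall>p\<in>I. \<forall>s\<in>I. (\<Sum>q\<in>I. E p q * G q s) = (if p = s then 1 else 0)"
    and right: "\<forall>p\<in>I. \<forall>s\<in>I. (\<Sum>q\<in>I. G p q * M q s) = (if p = s then 1 else 0)"
  shows "M p s = E p s"
proof -
  have "M p s = (\<Sum>u\<in>I. E p u * (\<Sum>j\<in>I. G u j * M j s))"
    using left_inverse_apply[OF \<open>finite I\<close> \<open>p \<in> I\<close> left] by simp
  also have "\<dots> = (\<Sum>u\<in>I. E p u * (if u = s then 1 else 0))"
    using right \<open>s \<in> I\<close> by (intro sum.cong) auto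
  also have "\<dots> = E p s" using assms by (simp only: sum_mult_delta_right)
  finally show ?thesis .
qed

definition index_mat :: "nat \<Rightarrow> (nat \<Rightarrow> nat \<Rightarrow> real) \<Rightarrow> real mat" where
  "index_mat n G = mat n n (\<lambda>(i, j). G (Suc i) (Suc j))"

lemma sum_one_to_n_shift: "(\<Sum>q\<in>{1..n}. f q) = (\<Sum>k\<in>{0..<n}. f (Suc k))"
  by (simp add: sum.atLeast1_atMost_eq atLeast0LessThan)

lemma index_mat_mult_vec:
  assumes "v \<in> carrier_vec n" "p \<in> {1..n}"
  shows "(index_mat n G *\<^sub>v v) $ (p - 1) = (\<Sum>q\<in>{1..n}. G p q * v $ (q - 1))"
  using assms unfolding sum_one_to_n_shift
  by (auto simp: index_mat_def scalar_prod_def row_def intro!: sum.cong)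

lemma index_mat_mult_entries:
  assumes "B \<in> carrier_mat n n" "p \<in> {1..n}" "s \<in> {1..n}"
  shows "(index_mat n G * B) $$ (p - 1, s - 1) = (\<Sum>q\<in>{1..n}. G p q * B $$ (q - 1, s - 1))"
    and "(B * index_mat n G) $$ (p - 1, s - 1) = (\<Sum>q\<in>{1..n}. B $$ (p - 1, q - 1) * G q s)"
  using assms unfolding sum_one_to_n_shift
  by (auto simp: index_mat_def scalar_prod_def row_def col_def intro!: sum.cong)

lemma det_index_mat_nonzero:
  assumes inj: "\<And>v. \<forall>p\<in>{1..n}. (\<Sum>q\<in>{1..n}. G p q * v q) = 0 \<Longrightarrow> \<forall>q\<in>{1..n}. v q = 0"
  shows "det (index_mat n G) \<noteq> 0"
proof
  assume "det (index_mat n G) = 0"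
  then obtain v where v: "v \<in> carrier_vec n" "v \<noteq> 0\<^sub>v n" "index_mat n G *\<^sub>v v = 0\<^sub>v n"
    using det_0_iff_vec_prod_zero[of "index_mat n G" n] by (auto simp: index_mat_def)
  define w where "w q = (if q \<in> {1..n} then v $ (q - 1) else 0)" for q
  have "\<forall>p\<in>{1..n}. (\<Sum>q\<in>{1..n}. G p q * w q) = 0"
  proof
    fix p assume p: "p \<in> {1..n}"
    have "(\<Sum>q\<in>{1..n}. G p q * w q) = (index_mat n G *\<^sub>v v) $ (p - 1)"
      using index_mat_mult_vec[OF v(1) p] by (simp add: w_def)
    also have "\<dots> = 0" using v(3) p by auto
    finally show "(\<Sum>q\<in>{1..n}. G p q * w q) = 0" .
  qed
  then have "\<forall>q\<in>{1..n}. w q = 0" by (rule inj)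
  then have "v = 0\<^sub>v n"
    using v(1) by (intro eq_vecI) (auto simp: w_def dest!: bspec[of _ _ "Suc _"])
  with v(2) show False by simp
qed

lemma matrix_inverse_exists:
  fixes G :: "nat \<Rightarrow> nat \<Rightarrow> real"
  assumes inj: "\<And>v. \<forall>p\<in>{1..n}. (\<Sum>q\<in>{1..n}. G p q * v q) = 0 \<Longrightarrow> \<forall>q\<in>{1..n}. v q = 0"
  obtains E where "\<forall>p\<in>{1..n}. \<forall>s\<in>{1..n}. (\<Sum>q\<in>{1..n}. G p q * E q s) = (if p = s then 1 else 0)"
    and "\<forall>p\<in>{1..n}. \<forall>s\<in>{1..n}. (\<Sum>q\<in>{1..n}. E p q * G q s) = (if p = s then 1 else 0)"
    and "\<forall>p q. p \<notin> {1..n} \<or> q \<notin> {1..n} \<longrightarrow> E p q = 0"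
proof -
  have A: "index_mat n G \<in> carrier_mat n n" by (simp add: index_mat_def)
  have "index_mat n G \<in> Units (ring_mat TYPE(real) n undefined)"
    by (rule det_non_zero_imp_unit[OF A det_index_mat_nonzero[OF inj]])
  then obtain B where B: "B \<in> carrier_mat n n" "B * index_mat n G = 1\<^sub>m n" "index_mat n G * B = 1\<^sub>m n"
    by (auto simp: Units_def ring_mat_def)
  define E where "E p q = (if p \<in> {1..n} \<and> q \<in> {1..n} then B $$ (p - 1, q - 1) else 0)" for p q
  have "(\<Sum>q\<in>{1..n}. G p q * E q s) = (index_mat n G * B) $$ (p - 1, s - 1)"
    and "(\<Sum>q\<in>{1..n}. E p q * G q s) = (B * index_mat n G) $$ (p - 1, s - 1)"
    if "p \<in> {1..n}" "s \<in> {1..n}" for p s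
    using index_mat_mult_entries[OF B(1) that, of G] that by (auto simp: E_def intro!: sum.cong)
  with B show ?thesis
    by (intro that[of E]) (auto simp: E_def)
qed

section \<open>Curvature of a Cartan tensor of Finsleroid shape\<close>

definition cartan_shape ::
    "real \<Rightarrow> real \<Rightarrow> ('a \<Rightarrow> real) \<Rightarrow> ('a \<Rightarrow> 'a \<Rightarrow> real) \<Rightarrow> 'a \<Rightarrow> 'a \<Rightarrow> 'a \<Rightarrow> real" where
  "cartan_shape \<alpha> \<beta> m h p q r =
     \<alpha> * (m p * h q r + m q * h p r + m r * h p q) + \<beta> * m p * m q * m r"

text \<open>In the lemmas below \<open>E\<close> plays the inverse metric, \<open>h\<close> the angular metric,
  \<open>X\<close> the point and \<open>mu\<close> the vector \<open>m\<close> with its index raised by \<open>E\<close>.\<close>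

lemma cartan_shape_raise:
  assumes hsym: "\<forall>a\<in>I. \<forall>b\<in>I. h a b = h b a"
    and Eh: "\<forall>t\<in>I. \<forall>s\<in>I. (\<Sum>u\<in>I. E t u * h u s) = (if t = s then 1 else 0) - X t * l s"
    and Em: "\<forall>t\<in>I. (\<Sum>u\<in>I. E t u * m u) = mu t"
    and "t \<in> I" "p \<in> I" "s \<in> I"
  shows "(\<Sum>u\<in>I. E t u * cartan_shape \<alpha> \<beta> m h p u s) =
      \<alpha> * m p * ((if t = s then 1 else 0) - X t * l s) + \<alpha> * h p s * mu t
      + \<alpha> * m s * ((if t = p then 1 else 0) - X t * l p) + \<beta> * m p * m s * mu t"
proof -
  have "(\<Sum>u\<in>I. E t u * cartan_shape \<alpha> \<beta> m h p u s) =
      (\<Sum>u\<in>I. \<alpha> * m p * (E t u * h u s) + \<alpha> * h p s * (E t u * m u)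
        + \<alpha> * m s * (E t u * h u p) + \<beta> * m p * m s * (E t u * m u))"
    using hsym \<open>p \<in> I\<close> by (intro sum.cong) (auto simp: cartan_shape_def algebra_simps)
  also have "\<dots> = \<alpha> * m p * (\<Sum>u\<in>I. E t u * h u s) + \<alpha> * h p s * (\<Sum>u\<in>I. E t u * m u)
      + \<alpha> * m s * (\<Sum>u\<in>I. E t u * h u p) + \<beta> * m p * m s * (\<Sum>u\<in>I. E t u * m u)"
    by (simp add: sum.distrib sum_distrib_left)
  finally show ?thesis using Eh Em assms(4-) by simp
qed

lemma cartan_shape_contract_null:
  assumes hX: "\<forall>s\<in>I. (\<Sum>t\<in>I. X t * h t s) = 0"
    and mX: "(\<Sum>t\<in>I. m t * X t) = 0"
    and "q \<in> I" "r \<in> I"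
  shows "(\<Sum>t\<in>I. cartan_shape \<alpha> \<beta> m h t q r * X t) = 0"
proof -
  have "(\<Sum>t\<in>I. cartan_shape \<alpha> \<beta> m h t q r * X t) =
      \<alpha> * h q r * (\<Sum>t\<in>I. m t * X t) + \<alpha> * m q * (\<Sum>t\<in>I. X t * h t r)
      + \<alpha> * m r * (\<Sum>t\<in>I. X t * h t q) + \<beta> * m q * m r * (\<Sum>t\<in>I. m t * X t)"
    by (simp add: cartan_shape_def sum.distrib sum_distrib_left algebra_simps)
  then show ?thesis using assms by simp
qed

lemma cartan_shape_contract_dual:
  assumes hmu: "\<forall>s\<in>I. (\<Sum>t\<in>I. mu t * h t s) = m s"
    and w: "w = (\<Sum>t\<in>I. mu t * m t)"
    and "q \<in> I" "r \<in> I"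
  shows "(\<Sum>t\<in>I. cartan_shape \<alpha> \<beta> m h t q r * mu t) =
      \<alpha> * (w * h q r + 2 * m q * m r) + \<beta> * w * m q * m r"
proof -
  have "(\<Sum>t\<in>I. cartan_shape \<alpha> \<beta> m h t q r * mu t) =
      \<alpha> * h q r * (\<Sum>t\<in>I. mu t * m t) + \<alpha> * m q * (\<Sum>t\<in>I. mu t * h t r)
      + \<alpha> * m r * (\<Sum>t\<in>I. mu t * h t q) + \<beta> * m q * m r * (\<Sum>t\<in>I. mu t * m t)"
    by (simp add: cartan_shape_def sum.distrib sum_distrib_left algebra_simps)
  then show ?thesis using assms by (simp add: algebra_simps)
qed

lemma cartan_shape_contract_raised:
  assumes "finite I"
    and hsym: "\<forall>a\<in>I. \<forall>b\<in>I. h a b = h b a"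
    and Eh: "\<forall>t\<in>I. \<forall>s\<in>I. (\<Sum>u\<in>I. E t u * h u s) = (if t = s then 1 else 0) - X t * l s"
    and Em: "\<forall>t\<in>I. (\<Sum>u\<in>I. E t u * m u) = mu t"
    and hmu: "\<forall>s\<in>I. (\<Sum>t\<in>I. mu t * h t s) = m s"
    and hX: "\<forall>s\<in>I. (\<Sum>t\<in>I. X t * h t s) = 0"
    and mX: "(\<Sum>t\<in>I. m t * X t) = 0"
    and w: "w = (\<Sum>t\<in>I. mu t * m t)"
    and "p \<in> I" "q \<in> I" "r \<in> I" "s \<in> I"
  shows "(\<Sum>t\<in>I. cartan_shape \<alpha> \<beta> m h t q r * (\<Sum>u\<in>I. E t u * cartan_shape \<alpha> \<beta> m h p u s)) =
      \<alpha> * m p * cartan_shape \<alpha> \<beta> m h s q r + \<alpha> * m s * cartan_shape \<alpha> \<beta> m h p q r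
      + (\<alpha> * h p s + \<beta> * m p * m s) * (\<alpha> * (w * h q r + 2 * m q * m r) + \<beta> * w * m q * m r)"
proof -
  let ?C = "cartan_shape \<alpha> \<beta> m h"
  have "(\<Sum>t\<in>I. ?C t q r * (\<Sum>u\<in>I. E t u * ?C p u s)) =
      (\<Sum>t\<in>I. \<alpha> * m p * (?C t q r * (if t = s then 1 else 0))
        + \<alpha> * m s * (?C t q r * (if t = p then 1 else 0))
        - (\<alpha> * m p * l s + \<alpha> * m s * l p) * (?C t q r * X t)
        + (\<alpha> * h p s + \<beta> * m p * m s) * (?C t q r * mu t))"
  proof (rule sum.cong[OF refl])
    fix t assume "t \<in> I"
    show "?C t q r * (\<Sum>u\<in>I. E t u * ?C p u s) =
        \<alpha> * m p * (?C t q r * (if t = s then 1 else 0))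
        + \<alpha> * m s * (?C t q r * (if t = p then 1 else 0))
        - (\<alpha> * m p * l s + \<alpha> * m s * l p) * (?C t q r * X t)
        + (\<alpha> * h p s + \<beta> * m p * m s) * (?C t q r * mu t)"
      unfolding cartan_shape_raise[OF hsym Eh Em \<open>t \<in> I\<close> \<open>p \<in> I\<close> \<open>s \<in> I\<close>]
      by (simp add: algebra_simps split del: if_split)
  qed
  also have "\<dots> = \<alpha> * m p * (\<Sum>t\<in>I. ?C t q r * (if t = s then 1 else 0))
      + \<alpha> * m s * (\<Sum>t\<in>I. ?C t q r * (if t = p then 1 else 0))
      - (\<alpha> * m p * l s + \<alpha> * m s * l p) * (\<Sum>t\<in>I. ?C t q r * X t)
      + (\<alpha> * h p s + \<beta> * m p * m s) * (\<Sum>t\<in>I. ?C t q r * mu t)"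
    by (simp only: sum.distrib sum_subtractf sum_distrib_left)
  also have "\<dots> = \<alpha> * m p * ?C s q r + \<alpha> * m s * ?C p q r
      + (\<alpha> * h p s + \<beta> * m p * m s) * (\<alpha> * (w * h q r + 2 * m q * m r) + \<beta> * w * m q * m r)"
    using assms
    by (simp add: sum_mult_delta_right cartan_shape_contract_null cartan_shape_contract_dual)
  finally show ?thesis .
qed

text \<open>The balance \<open>\<alpha> + \<beta> w = 0\<close> kills every term of the curvature that involves \<open>m\<close>.\<close>

lemma curvature_of_cartan_shape:
  assumes "finite I"
    and hsym: "\<forall>a\<in>I. \<forall>b\<in>I. h a b = h b a"
    and Eh: "\<forall>t\<in>I. \<forall>s\<in>I. (\<Sum>u\<in>I. E t u * h u s) = (if t = s then 1 else 0) - X t * l s"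
    and Em: "\<forall>t\<in>I. (\<Sum>u\<in>I. E t u * m u) = mu t"
    and hmu: "\<forall>s\<in>I. (\<Sum>t\<in>I. mu t * h t s) = m s"
    and hX: "\<forall>s\<in>I. (\<Sum>t\<in>I. X t * h t s) = 0"
    and mX: "(\<Sum>t\<in>I. m t * X t) = 0"
    and w: "w = (\<Sum>t\<in>I. mu t * m t)"
    and balance: "\<alpha> + \<beta> * w = 0"
    and "p \<in> I" "q \<in> I" "r \<in> I" "s \<in> I"
  shows "(\<Sum>t\<in>I. cartan_shape \<alpha> \<beta> m h t q r * (\<Sum>u\<in>I. E t u * cartan_shape \<alpha> \<beta> m h p u s)
            - cartan_shape \<alpha> \<beta> m h t q s * (\<Sum>u\<in>I. E t u * cartan_shape \<alpha> \<beta> m h p u r))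
         = - (\<alpha>\<^sup>2 * w) * (h p r * h q s - h p s * h q r)"
proof -
  have hs: "h s r = h r s" "h s q = h q s" "h r q = h q r" "h p q = h q p"
    using hsym assms(10-) by auto
  have \<alpha>: "\<alpha> = - \<beta> * w" using balance by simp
  show ?thesis
    unfolding sum_subtractf
      cartan_shape_contract_raised[OF assms(1-8) \<open>p \<in> I\<close> \<open>q \<in> I\<close> \<open>r \<in> I\<close> \<open>s \<in> I\<close>]
      cartan_shape_contract_raised[OF assms(1-8) \<open>p \<in> I\<close> \<open>q \<in> I\<close> \<open>s \<in> I\<close> \<open>r \<in> I\<close>]
    unfolding cartan_shape_def hs \<alpha>
    by (simp add: power2_eq_square algebra_simps)
qed

section \<open>Closed forms of the Finsleroid tensors\<close>

lemma cartan_derivative_identity: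
  fixes P g Z q ep ej er kp kj kr rjp rpj rpr rjr B mp mj mr dkp dB dmp yj :: real
  assumes "q \<noteq> 0" and B: "B = Z\<^sup>2 + g*q*Z + q\<^sup>2" and "B \<noteq> 0"
    and "mp = (q*ep - Z*kp)/B" and "mj = (q*ej - Z*kj)/B" and "mr = (q*er - Z*kr)/B"
    and "dkp = (rpr - kp*kr)/q"
    and "dB = 2*Z*er + g*(kr*Z + q*er) + 2*q*kr"
    and "dmp = ((kr*ep - (er*kp + Z*dkp))*B - (q*ep - Z*kp)*dB)/B\<^sup>2"
    and "yj = q*kj" and "rpj = rjp"
  shows "P*g*mr*(rjp + (ep + g*kp)*ej + g*mp*(yj + (Z + g*q)*ej))
        + (g*dkp*ej + g*dmp*(yj + (Z + g*q)*ej) + g*mp*(rjr + (er + g*kr)*ej)) * P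
       = 2 * (g/2 * P * ((rpj - kp*kj)*mr + (rpr - kp*kr)*mj + (rjr - kj*kr)*mp + 2*B*mp*mj*mr))"
  unfolding assms(4-)
  using assms(1,3) apply (simp add: field_simps power2_eq_square)
  using B unfolding power2_eq_square by Groebner_Basis.algebra

lemma angular_metric_identity:
  fixes P g Z q ea eb ka kb rab B ma mb :: real
  assumes "q \<noteq> 0" and B: "B = Z\<^sup>2 + g*q*Z + q\<^sup>2" and "B \<noteq> 0" and "P \<noteq> 0"
    and "ma = (q*ea - Z*ka)/B" and "mb = (q*eb - Z*kb)/B"
  shows "P * (rab + (ea + g * ka) * eb + g * ma * (q * kb + (Z + g * q) * eb))
     - P * (q * ka + (Z + g * q) * ea) * (P * (q * kb + (Z + g * q) * eb)) / (P * B)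
     = P * (rab - ka * kb + B * ma * mb)"
  unfolding assms(5-)
  using assms(1,3,4) apply (simp add: field_simps power2_eq_square)
  using B unfolding power2_eq_square by Groebner_Basis.algebra

lemma raised_mvec_identity:
  fixes P g Z q ep kp B mp :: real
  assumes "q \<noteq> 0" and B: "B = Z\<^sup>2 + g*q*Z + q\<^sup>2" and "B \<noteq> 0" and "P \<noteq> 0"
    and m: "mp = (q*ep - Z*kp)/B"
  shows "(P * (ep + g * kp + g * mp * (Z + g * q))
          - (Z + g * q) / B * (P * (q * kp + (Z + g * q) * ep))) / (P * q) = mp"
  unfolding m
  using assms(1,3,4) apply (simp add: field_simps power2_eq_square)
  using B unfolding power2_eq_square by Groebner_Basis.algebra

lemma metric_kernel_system_trivial:
  fixes a S B Z g q :: real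
  assumes B: "B = Z\<^sup>2 + g*q*Z + q\<^sup>2" and "B \<noteq> 0" and "q \<noteq> 0"
    and e1: "a*B + g*q*(S + (Z + g*q)*a) = 0"
    and e2: "S*B + q*(g*a*B - g*Z*(S + (Z + g*q)*a)) = 0"
  shows "a = 0 \<and> S = 0"
proof -
  have "a * B\<^sup>2 = (Z\<^sup>2 + q\<^sup>2) * (a*B + g*q*(S + (Z + g*q)*a))
                 - g*q*(S*B + q*(g*a*B - g*Z*(S + (Z + g*q)*a)))"
    unfolding B by (simp add: power2_eq_square algebra_simps)
  with e1 e2 \<open>B \<noteq> 0\<close> have a: "a = 0" by simp
  have "S * (Z\<^sup>2 + q\<^sup>2) = S*B + q*(g*a*B - g*Z*(S + (Z + g*q)*a))"
    unfolding B a by (simp add: power2_eq_square algebra_simps)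
  with e2 have "S * (Z\<^sup>2 + q\<^sup>2) = 0" by simp
  moreover have "Z\<^sup>2 + q\<^sup>2 > 0" using \<open>q \<noteq> 0\<close> by (simp add: add_nonneg_pos)
  ultimately show ?thesis using a \<open>q \<noteq> 0\<close> by auto
qed

definition coord_shift :: "(nat \<Rightarrow> real) \<Rightarrow> nat \<Rightarrow> real \<Rightarrow> nat \<Rightarrow> real" where
  "coord_shift X p t = X(p := X p + t)"

lemma coord_shift_0 [simp]: "coord_shift X p 0 = X"
  by (simp add: coord_shift_def)

lemma pd_eq_deriv_coord_shift: "pd f p X = deriv (\<lambda>t. f (coord_shift X p t)) 0"
  by (simp add: pd_def coord_shift_def)

lemma DERIV_coord_shift:
  "((\<lambda>t. coord_shift X p t i) has_real_derivative (if i = p then 1 else 0)) (at 0)"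
  by (cases "i = p") (auto simp: coord_shift_def intro!: derivative_eq_intros)

lemma eventually_pos_of_DERIV:
  fixes f :: "real \<Rightarrow> real"
  assumes "(f has_real_derivative D) (at x)" "f x > 0"
  shows "eventually (\<lambda>t. f t > 0) (nhds x)"
  using DERIV_isCont[OF assms(1)] assms(2)
  unfolding isCont_def tendsto_at_iff_tendsto_nhds by (rule order_tendstoD(1))

locale finsleroid =
  fixes N :: nat and rr :: "nat \<Rightarrow> nat \<Rightarrow> real" and g :: real
  assumes N_ge_2: "N \<ge> 2"
    and rr_sym: "\<forall>a\<in>{1..<N}. \<forall>b\<in>{1..<N}. rr a b = rr b a"
    and rr_pos_def: "\<forall>x :: nat \<Rightarrow> real. (\<exists>a\<in>{1..<N}. x a \<noteq> 0) \<longrightarrow>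
           (\<Sum>a\<in>{1..<N}. \<Sum>b\<in>{1..<N}. rr a b * x a * x b) > 0"
    and g_gt: "-2 < g" and g_lt: "g < 2"
begin

abbreviation qq :: "(nat \<Rightarrow> real) \<Rightarrow> real" where "qq X \<equiv> fq N rr X"
abbreviation BB :: "(nat \<Rightarrow> real) \<Rightarrow> real" where "BB X \<equiv> fB N rr g X"

definition quad :: "(nat \<Rightarrow> real) \<Rightarrow> real" where
  "quad X = (\<Sum>a\<in>{1..<N}. \<Sum>b\<in>{1..<N}. rr a b * X a * X b)"

definition ylow :: "(nat \<Rightarrow> real) \<Rightarrow> nat \<Rightarrow> real" where
  "ylow X p = (if p \<in> {1..<N} then \<Sum>b\<in>{1..<N}. rr p b * X b else 0)"

definition rext :: "nat \<Rightarrow> nat \<Rightarrow> real" where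
  "rext p q = (if p \<in> {1..<N} \<and> q \<in> {1..<N} then rr p q else 0)"

definition eN :: "nat \<Rightarrow> real" where
  "eN p = (if p = N then 1 else 0)"

definition qgrad :: "(nat \<Rightarrow> real) \<Rightarrow> nat \<Rightarrow> real" where
  "qgrad X p = ylow X p / qq X"

definition J2 :: "(nat \<Rightarrow> real) \<Rightarrow> real" where
  "J2 X = exp (fG g * fPhi N rr g X)"

text \<open>\<open>fh g * mvec X p\<close> is the derivative of \<open>\<Phi>\<close> in the direction \<open>R\<^sup>p\<close>.\<close>

definition mvec :: "(nat \<Rightarrow> real) \<Rightarrow> nat \<Rightarrow> real" where
  "mvec X p = (qq X * eN p - X N * qgrad X p) / BB X"

definition rho :: "(nat \<Rightarrow> real) \<Rightarrow> nat \<Rightarrow> nat \<Rightarrow> real" where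
  "rho X a b = rext a b - qgrad X a * qgrad X b"

text \<open>The suffix \<open>_cf\<close> marks closed forms, which agree with \<open>Rlow\<close>, \<open>gmet\<close>, \<open>hten\<close>
  and \<open>Cartan\<close> at points where \<open>qq X > 0\<close>.\<close>

definition Rlow_cf :: "(nat \<Rightarrow> real) \<Rightarrow> nat \<Rightarrow> real" where
  "Rlow_cf X j = J2 X * (ylow X j + (X N + g * qq X) * eN j)"

definition gmet_cf :: "(nat \<Rightarrow> real) \<Rightarrow> nat \<Rightarrow> nat \<Rightarrow> real" where
  "gmet_cf X p j = J2 X * (rext j p + (eN p + g * qgrad X p) * eN j
                           + g * mvec X p * (ylow X j + (X N + g * qq X) * eN j))"

definition hten_cf :: "(nat \<Rightarrow> real) \<Rightarrow> nat \<Rightarrow> nat \<Rightarrow> real" where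
  "hten_cf X a b = J2 X * (rho X a b + BB X * mvec X a * mvec X b)"

definition cartan_cf :: "(nat \<Rightarrow> real) \<Rightarrow> nat \<Rightarrow> nat \<Rightarrow> nat \<Rightarrow> real" where
  "cartan_cf X p j r = g/2 * J2 X * (rho X p j * mvec X r + rho X p r * mvec X j
                          + rho X j r * mvec X p + 2 * BB X * mvec X p * mvec X j * mvec X r)"

lemma fh_pos: "fh g > 0" and fh_sq: "(fh g)\<^sup>2 = 1 - g\<^sup>2 / 4"
proof -
  have "(2 - g) * (2 + g) > 0" using g_gt g_lt by simp
  then have "g\<^sup>2 < 4" by (simp add: power2_eq_square algebra_simps)
  then show "fh g > 0" "(fh g)\<^sup>2 = 1 - g\<^sup>2 / 4" unfolding fh_def by simp_all
qed

lemma qq_eq_sqrt_quad: "qq X = sqrt (quad X)"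
  by (simp add: fq_def quad_def)

lemma quad_eq_qq_sq: "qq X > 0 \<Longrightarrow> quad X = (qq X)\<^sup>2"
  by (metis less_eq_real_def qq_eq_sqrt_quad real_sqrt_gt_0_iff real_sqrt_pow2)

lemma BB_eq_sum_squares: "BB X = (X N + g * qq X / 2)\<^sup>2 + (fh g)\<^sup>2 * (qq X)\<^sup>2"
  unfolding fB_def fh_sq by (simp add: power2_eq_square algebra_simps)

lemma BB_nonneg: "BB X \<ge> 0"
  unfolding BB_eq_sum_squares by simp

lemma BB_pos: "qq X > 0 \<Longrightarrow> BB X > 0"
  unfolding BB_eq_sum_squares using fh_pos by (intro add_nonneg_pos) auto

lemma J2_pos: "J2 X > 0"
  by (simp add: J2_def)

lemma fK2_eq: "fK2 N rr g X = J2 X * BB X"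
proof -
  have "(exp (fG g * fPhi N rr g X / 2))\<^sup>2 = exp (fG g * fPhi N rr g X)"
    by (simp add: power2_eq_square flip: exp_add)
  then show ?thesis using BB_nonneg[of X]
    by (simp add: fK2_def fK_def fJ_def J2_def power_mult_distrib)
qed

lemma ylow_N [simp]: "ylow X N = 0" by (simp add: ylow_def)
lemma qgrad_N [simp]: "qgrad X N = 0" by (simp add: qgrad_def)
lemma eN_N [simp]: "eN N = 1" by (simp add: eN_def)

lemma ylow_eq_qq_qgrad: "qq X > 0 \<Longrightarrow> ylow X j = qq X * qgrad X j"
  by (simp add: qgrad_def)

lemma rext_sym: "rext a b = rext b a"
  using rr_sym by (auto simp: rext_def)

lemma DERIV_quad_shift:
  assumes "p \<in> {1..N}"
  shows "((\<lambda>t. quad (coord_shift X p t)) has_real_derivative 2 * ylow X p) (at 0)"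
proof -
  let ?d = "\<lambda>i. if i = p then 1 else 0 :: real"
  have "((\<lambda>t. quad (coord_shift X p t)) has_real_derivative
      (\<Sum>a\<in>{1..<N}. \<Sum>b\<in>{1..<N}. rr a b * (?d a * X b + X a * ?d b))) (at 0)"
    unfolding quad_def
    by (intro DERIV_sum DERIV_cong[OF DERIV_mult[OF DERIV_cmult[OF DERIV_coord_shift] DERIV_coord_shift]])
      (simp add: algebra_simps)
  moreover have "(\<Sum>a\<in>{1..<N}. \<Sum>b\<in>{1..<N}. rr a b * (?d a * X b + X a * ?d b)) = 2 * ylow X p"
  proof (cases "p \<in> {1..<N}")
    case True
    have inner: "(\<Sum>b\<in>{1..<N}. rr a b * (?d a * X b + X a * ?d b))
        = (\<Sum>b\<in>{1..<N}. rr a b * X b) * ?d a + rr a p * X a" for a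
    proof -
      have "(\<Sum>b\<in>{1..<N}. rr a b * (X a * ?d b)) = rr a p * X a"
        using True by (simp add: if_distrib sum.delta' cong: if_cong)
      then show ?thesis by (simp add: distrib_left sum.distrib sum_distrib_left mult_ac)
    qed
    have "(\<Sum>a\<in>{1..<N}. \<Sum>b\<in>{1..<N}. rr a b * (?d a * X b + X a * ?d b))
        = (\<Sum>b\<in>{1..<N}. rr p b * X b) + (\<Sum>a\<in>{1..<N}. rr a p * X a)"
      unfolding inner sum.distrib sum_mult_delta_right[OF finite_atLeastLessThan True] ..
    also have "(\<Sum>a\<in>{1..<N}. rr a p * X a) = (\<Sum>b\<in>{1..<N}. rr p b * X b)"
      using True rr_sym by (intro sum.cong) auto
    finally show ?thesis using True by (simp add: ylow_def)
  next
    case False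
    then show ?thesis by (auto simp: ylow_def intro!: sum.neutral)
  qed
  ultimately show ?thesis by simp
qed

lemma DERIV_qq_shift:
  assumes pos: "qq X > 0" and "p \<in> {1..N}"
  shows "((\<lambda>t. qq (coord_shift X p t)) has_real_derivative qgrad X p) (at 0)"
proof -
  have "quad X > 0" using pos by (simp add: qq_eq_sqrt_quad)
  then have "((\<lambda>t. sqrt (quad (coord_shift X p t))) has_real_derivative
      inverse (sqrt (quad X)) / 2 * (2 * ylow X p)) (at 0)"
    using DERIV_chain2[OF DERIV_real_sqrt DERIV_quad_shift[OF \<open>p \<in> {1..N}\<close>]] by simp
  then show ?thesis by (simp add: qq_eq_sqrt_quad qgrad_def field_simps)
qed

lemma eventually_qq_pos_shift:
  assumes "qq X > 0" "p \<in> {1..N}"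
  shows "eventually (\<lambda>t. qq (coord_shift X p t) > 0) (nhds 0)"
  using eventually_pos_of_DERIV[OF DERIV_qq_shift[OF assms]] assms(1) by simp

lemma DERIV_last_coord_shift:
  "((\<lambda>t. coord_shift X p t N) has_real_derivative eN p) (at 0)"
  using DERIV_coord_shift[of X p N] by (auto simp: eN_def)

lemma DERIV_ylow_shift:
  "((\<lambda>t. ylow (coord_shift X p t) a) has_real_derivative rext a p) (at 0)"
proof (cases "a \<in> {1..<N}")
  case True
  have "((\<lambda>t. \<Sum>b\<in>{1..<N}. rr a b * coord_shift X p t b) has_real_derivative
      (\<Sum>b\<in>{1..<N}. rr a b * (if b = p then 1 else 0))) (at 0)"
    by (intro DERIV_sum DERIV_cmult DERIV_coord_shift)
  moreover have "(\<Sum>b\<in>{1..<N}. rr a b * (if b = p then 1 else 0)) = rext a p"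
    using True by (simp add: rext_def if_distrib sum.delta' cong: if_cong)
  ultimately show ?thesis using True by (simp add: ylow_def)
next
  case False
  then have "(\<lambda>t. ylow (coord_shift X p t) a) = (\<lambda>t. 0)" "rext a p = 0"
    by (auto simp: ylow_def rext_def)
  then show ?thesis by simp
qed

lemma DERIV_BB_shift:
  assumes "qq X > 0" "p \<in> {1..N}"
  shows "((\<lambda>t. BB (coord_shift X p t)) has_real_derivative
     2 * X N * eN p + g * (qgrad X p * X N + qq X * eN p) + 2 * qq X * qgrad X p) (at 0)"
proof -
  note Z = DERIV_last_coord_shift[of X p] and Q = DERIV_qq_shift[OF assms]
  show ?thesis
    unfolding fB_def
    by (rule DERIV_cong[OF DERIV_add[OF DERIV_add[OF DERIV_power[OF Z]
          DERIV_mult[OF DERIV_cmult[OF Q] Z]] DERIV_power[OF Q]]])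
      (simp add: algebra_simps)
qed

lemma DERIV_qgrad_shift:
  assumes pos: "qq X > 0" and "p \<in> {1..N}"
  shows "((\<lambda>t. qgrad (coord_shift X p t) a) has_real_derivative rho X a p / qq X) (at 0)"
proof -
  have "((\<lambda>t. ylow (coord_shift X p t) a / qq (coord_shift X p t)) has_real_derivative
      (rext a p * qq X - ylow X a * qgrad X p) / (qq X * qq X)) (at 0)"
    using DERIV_divide[OF DERIV_ylow_shift[of X p a] DERIV_qq_shift[OF assms]] pos by simp
  moreover have "(rext a p * qq X - ylow X a * qgrad X p) / (qq X * qq X) = rho X a p / qq X"
    using pos by (simp add: rho_def qgrad_def field_simps)
  ultimately show ?thesis by (simp add: qgrad_def)
qed

lemma DERIV_Phi_shift:
  assumes pos: "qq X > 0" and p: "p \<in> {1..N}"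
  shows "((\<lambda>t. fPhi N rr g (coord_shift X p t)) has_real_derivative fh g * mvec X p) (at 0)"
proof -
  note Z = DERIV_last_coord_shift[of X p] and Q = DERIV_qq_shift[OF pos p]
  define h where "h = fh g"
  have h: "h > 0" "h\<^sup>2 = 1 - g\<^sup>2 / 4" using fh_pos fh_sq by (auto simp: h_def)
  let ?u = "\<lambda>Y. (Y N + g * qq Y / 2) / (h * qq Y)"
  define u' where "u' = ((eN p + g * qgrad X p / 2) * (h * qq X)
                         - (X N + g * qq X / 2) * (h * qgrad X p)) / (h * qq X)\<^sup>2"
  have "((\<lambda>t. ?u (coord_shift X p t)) has_real_derivative u') (at 0)"
    unfolding u'_def using h pos
    by (intro DERIV_cong[OF DERIV_divide[OF DERIV_add[OF Z DERIV_cdivide[OF DERIV_cmult[OF Q]]]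
          DERIV_cmult[OF Q]]]) (auto simp: power2_eq_square)
  from DERIV_chain2[OF DERIV_arctan this]
  have arctan_u: "((\<lambda>t. arctan (?u (coord_shift X p t))) has_real_derivative
      inverse (1 + (?u X)\<^sup>2) * u') (at 0)"
    by simp
  have "1 + (?u X)\<^sup>2 = BB X / (h * qq X)\<^sup>2"
    using h pos unfolding BB_eq_sum_squares h_def[symmetric] by (simp add: field_simps power2_eq_square)
  moreover have "u' = (qq X * eN p - X N * qgrad X p) / (h * (qq X)\<^sup>2)"
    unfolding u'_def using h pos by (simp add: field_simps power2_eq_square)
  ultimately have "inverse (1 + (?u X)\<^sup>2) * u'
      = (h * qq X)\<^sup>2 / BB X * ((qq X * eN p - X N * qgrad X p) / (h * (qq X)\<^sup>2))"
    by simp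
  also have "\<dots> = h * mvec X p"
    using h pos BB_pos[OF pos] by (simp add: mvec_def field_simps power2_eq_square)
  moreover have "eventually (\<lambda>t. fPhi N rr g (coord_shift X p t) = arctan (?u (coord_shift X p t))) (nhds 0)"
    using eventually_qq_pos_shift[OF pos p] by (rule eventually_mono) (simp add: fPhi_def fA_def h_def)
  ultimately show ?thesis
    using arctan_u by (simp add: DERIV_cong_ev[OF refl _ refl] h_def)
qed

lemma DERIV_J2_shift:
  assumes "qq X > 0" "p \<in> {1..N}"
  shows "((\<lambda>t. J2 (coord_shift X p t)) has_real_derivative J2 X * g * mvec X p) (at 0)"
  unfolding J2_def
  using DERIV_chain2[OF DERIV_exp DERIV_cmult[OF DERIV_Phi_shift[OF assms]], of "fG g"]
  by (rule DERIV_cong) (use fh_pos in \<open>simp add: fG_def\<close>)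

lemma DERIV_fK2_shift:
  assumes pos: "qq X > 0" and "p \<in> {1..N}"
  shows "((\<lambda>t. fK2 N rr g (coord_shift X p t)) has_real_derivative 2 * Rlow_cf X p) (at 0)"
  unfolding fK2_eq
  using DERIV_mult[OF DERIV_J2_shift[OF assms] DERIV_BB_shift[OF assms]]
  by (rule DERIV_cong)
    (use pos BB_pos[OF pos] in \<open>simp add: Rlow_cf_def mvec_def ylow_eq_qq_qgrad field_simps\<close>)

lemma pd_fK2_eq: "qq X > 0 \<Longrightarrow> p \<in> {1..N} \<Longrightarrow> pd (fK2 N rr g) p X = 2 * Rlow_cf X p"
  unfolding pd_eq_deriv_coord_shift by (rule DERIV_imp_deriv[OF DERIV_fK2_shift])

lemma Rlow_eq: "qq X > 0 \<Longrightarrow> p \<in> {1..N} \<Longrightarrow> Rlow N rr g p X = Rlow_cf X p"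
  by (simp add: Rlow_def pd_fK2_eq)

lemma DERIV_pd_fK2_shift:
  assumes pos: "qq X > 0" and p: "p \<in> {1..N}" and j: "j \<in> {1..N}"
  shows "((\<lambda>t. pd (fK2 N rr g) j (coord_shift X p t)) has_real_derivative 2 * gmet_cf X p j) (at 0)"
proof -
  note Z = DERIV_last_coord_shift[of X p] and Q = DERIV_qq_shift[OF pos p]
  have "eventually (\<lambda>t. pd (fK2 N rr g) j (coord_shift X p t) = 2 * Rlow_cf (coord_shift X p t) j) (nhds 0)"
    using eventually_qq_pos_shift[OF pos p] by (rule eventually_mono) (rule pd_fK2_eq[OF _ j])
  moreover have "((\<lambda>t. 2 * Rlow_cf (coord_shift X p t) j) has_real_derivative 2 * gmet_cf X p j) (at 0)"
    unfolding Rlow_cf_def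
    by (rule DERIV_cong[OF DERIV_cmult[OF DERIV_mult[OF DERIV_J2_shift[OF pos p]
          DERIV_add[OF DERIV_ylow_shift DERIV_mult[OF DERIV_add[OF Z DERIV_cmult[OF Q]] DERIV_const]]]]])
      (simp add: gmet_cf_def algebra_simps)
  ultimately show ?thesis by (simp add: DERIV_cong_ev[OF refl _ refl])
qed

lemma gmet_eq:
  "qq X > 0 \<Longrightarrow> p \<in> {1..N} \<Longrightarrow> j \<in> {1..N} \<Longrightarrow> gmet N rr g p j X = gmet_cf X p j"
  unfolding gmet_def pd_eq_deriv_coord_shift[of "\<lambda>X. pd (fK2 N rr g) j X"]
  using DERIV_imp_deriv[OF DERIV_pd_fK2_shift] by simp

lemma DERIV_mvec_shift:
  assumes pos: "qq X > 0" and r: "r \<in> {1..N}"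
  shows "((\<lambda>t. mvec (coord_shift X r t) p) has_real_derivative
     ((qgrad X r * eN p - (eN r * qgrad X p + X N * (rho X p r / qq X))) * BB X
       - (qq X * eN p - X N * qgrad X p)
         * (2 * X N * eN r + g * (qgrad X r * X N + qq X * eN r) + 2 * qq X * qgrad X r))
     / (BB X)\<^sup>2) (at 0)"
  unfolding mvec_def
  by (rule DERIV_cong[OF DERIV_divide[OF DERIV_diff[OF DERIV_mult[OF DERIV_qq_shift[OF pos r] DERIV_const]
        DERIV_mult[OF DERIV_last_coord_shift DERIV_qgrad_shift[OF pos r]]] DERIV_BB_shift[OF pos r]]])
    (use BB_pos[OF pos] in \<open>simp_all add: power2_eq_square algebra_simps\<close>)

lemma DERIV_gmet_shift:
  assumes pos: "qq X > 0" and p: "p \<in> {1..N}" and j: "j \<in> {1..N}" and r: "r \<in> {1..N}"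
  shows "((\<lambda>t. gmet N rr g p j (coord_shift X r t)) has_real_derivative 2 * cartan_cf X p j r) (at 0)"
proof -
  note Z = DERIV_last_coord_shift[of X r] and Q = DERIV_qq_shift[OF pos r]
  define dB where "dB = 2 * X N * eN r + g * (qgrad X r * X N + qq X * eN r) + 2 * qq X * qgrad X r"
  define dm where "dm = ((qgrad X r * eN p - (eN r * qgrad X p + X N * (rho X p r / qq X))) * BB X
       - (qq X * eN p - X N * qgrad X p) * dB) / (BB X)\<^sup>2"
  have dmvec: "((\<lambda>t. mvec (coord_shift X r t) p) has_real_derivative dm) (at 0)"
    unfolding dm_def dB_def by (rule DERIV_mvec_shift[OF pos r])
  have dW: "((\<lambda>t. rext j p + (eN p + g * qgrad (coord_shift X r t) p) * eN j
        + g * mvec (coord_shift X r t) p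
            * (ylow (coord_shift X r t) j + (coord_shift X r t N + g * qq (coord_shift X r t)) * eN j))
      has_real_derivative
        g * (rho X p r / qq X) * eN j + g * dm * (ylow X j + (X N + g * qq X) * eN j)
        + g * mvec X p * (rext j r + (eN r + g * qgrad X r) * eN j)) (at 0)"
    by (rule DERIV_cong[OF DERIV_add[OF DERIV_add[OF DERIV_const DERIV_mult[OF DERIV_add[OF DERIV_const
          DERIV_cmult[OF DERIV_qgrad_shift[OF pos r]]] DERIV_const]]
        DERIV_mult[OF DERIV_cmult[OF dmvec] DERIV_add[OF DERIV_ylow_shift DERIV_mult[OF DERIV_add[OF Z
          DERIV_cmult[OF Q]] DERIV_const]]]]]) (simp add: algebra_simps)
  let ?W = "rext j p + (eN p + g * qgrad X p) * eN j + g * mvec X p * (ylow X j + (X N + g * qq X) * eN j)"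
  let ?dW = "g * (rho X p r / qq X) * eN j + g * dm * (ylow X j + (X N + g * qq X) * eN j)
             + g * mvec X p * (rext j r + (eN r + g * qgrad X r) * eN j)"
  have "((\<lambda>t. gmet_cf (coord_shift X r t) p j) has_real_derivative J2 X * g * mvec X r * ?W + ?dW * J2 X) (at 0)"
    unfolding gmet_cf_def by (rule DERIV_cong[OF DERIV_mult[OF DERIV_J2_shift[OF pos r] dW]]) simp
  moreover have "J2 X * g * mvec X r * ?W + ?dW * J2 X = 2 * cartan_cf X p j r"
    unfolding cartan_cf_def rho_def
    by (rule cartan_derivative_identity[where dB = dB])
      (use pos BB_pos[OF pos] in \<open>simp_all add: fB_def ylow_eq_qq_qgrad mvec_def rho_def dm_def dB_def rext_sym\<close>)
  ultimately have "((\<lambda>t. gmet_cf (coord_shift X r t) p j) has_real_derivative 2 * cartan_cf X p j r) (at 0)"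
    by simp
  moreover have "eventually (\<lambda>t. gmet N rr g p j (coord_shift X r t) = gmet_cf (coord_shift X r t) p j) (nhds 0)"
    using eventually_qq_pos_shift[OF pos r] by (rule eventually_mono) (rule gmet_eq[OF _ p j])
  ultimately show ?thesis by (simp add: DERIV_cong_ev[OF refl _ refl])
qed

lemma Cartan_eq:
  "qq X > 0 \<Longrightarrow> p \<in> {1..N} \<Longrightarrow> j \<in> {1..N} \<Longrightarrow> r \<in> {1..N} \<Longrightarrow>
    Cartan N rr g p j r X = cartan_cf X p j r"
  unfolding Cartan_def pd_eq_deriv_coord_shift[of "\<lambda>X. gmet N rr g p j X"]
  using DERIV_imp_deriv[OF DERIV_gmet_shift] by simp

section \<open>Contractions and the inverse metric\<close>

definition mvec_up :: "(nat \<Rightarrow> real) \<Rightarrow> nat \<Rightarrow> real" where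
  "mvec_up X j = (eN j - (X N + g * qq X) / BB X * X j) / (J2 X * qq X)"

lemma sum_upto_N_split: "(\<Sum>q\<in>{1..N}. f q) = (\<Sum>q\<in>{1..<N}. f q) + f N"
proof -
  have "{1..N} = insert N {1..<N}" using N_ge_2 by auto
  then show ?thesis by (simp add: add.commute)
qed

lemma sum_eN_mult: "(\<Sum>q\<in>{1..N}. eN q * v q) = v N"
  unfolding sum_upto_N_split by (simp add: eN_def)

lemma sum_rext_mult: "(\<Sum>q\<in>{1..N}. rext q p * v q) = ylow v p"
proof -
  have "(\<Sum>q\<in>{1..N}. rext q p * v q) = (\<Sum>q\<in>{1..<N}. rext q p * v q)"
    unfolding sum_upto_N_split by (simp add: rext_def)
  also have "\<dots> = ylow v p"
    using rr_sym by (auto simp: rext_def ylow_def intro!: sum.cong)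
  finally show ?thesis .
qed

lemma sum_mult_ylow:
  "(\<Sum>p\<in>{1..N}. u p * ylow v p) = (\<Sum>a\<in>{1..<N}. \<Sum>b\<in>{1..<N}. rr a b * u a * v b)"
proof -
  have "(\<Sum>p\<in>{1..N}. u p * ylow v p) = (\<Sum>p\<in>{1..<N}. u p * ylow v p)"
    unfolding sum_upto_N_split by simp
  also have "\<dots> = (\<Sum>a\<in>{1..<N}. \<Sum>b\<in>{1..<N}. rr a b * u a * v b)"
    by (auto simp: ylow_def sum_distrib_left algebra_simps intro!: sum.cong)
  finally show ?thesis .
qed

lemma sum_mult_ylow_swap: "(\<Sum>p\<in>{1..N}. u p * ylow v p) = (\<Sum>p\<in>{1..N}. v p * ylow u p)"
  unfolding sum_mult_ylow
  by (subst sum.swap) (use rr_sym in \<open>auto simp: algebra_simps intro!: sum.cong\<close>)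

lemma sum_mult_ylow_self: "(\<Sum>p\<in>{1..N}. X p * ylow X p) = quad X"
  unfolding sum_mult_ylow quad_def by (simp add: algebra_simps)

lemma sum_mult_qgrad_self:
  assumes "qq X > 0"
  shows "(\<Sum>p\<in>{1..N}. X p * qgrad X p) = qq X"
proof -
  have "(\<Sum>p\<in>{1..N}. X p * qgrad X p) = (\<Sum>p\<in>{1..N}. X p * ylow X p) / qq X"
    by (simp add: qgrad_def sum_divide_distrib)
  also have "\<dots> = qq X"
    unfolding sum_mult_ylow_self quad_eq_qq_sq[OF assms] using assms by (simp add: power2_eq_square)
  finally show ?thesis .
qed

lemma sum_gmet_cf_mult:
  "(\<Sum>j\<in>{1..N}. gmet_cf X p j * v j) = J2 X * (ylow v p + (eN p + g * qgrad X p) * v N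
      + g * mvec X p * ((\<Sum>j\<in>{1..N}. v j * ylow X j) + (X N + g * qq X) * v N))"
proof -
  have pt: "gmet_cf X p j * v j = J2 X * (rext j p * v j) + J2 X * (eN p + g * qgrad X p) * (eN j * v j)
      + J2 X * g * mvec X p * (v j * ylow X j) + J2 X * g * mvec X p * (X N + g * qq X) * (eN j * v j)"
    for j by (simp add: gmet_cf_def algebra_simps)
  show ?thesis
    unfolding pt sum.distrib sum_distrib_left[symmetric] sum_rext_mult sum_eN_mult
    by (simp add: algebra_simps)
qed

lemma gmet_cf_contract_eN:
  "(\<Sum>j\<in>{1..N}. gmet_cf X p j * eN j) = J2 X * (eN p + g * qgrad X p + g * mvec X p * (X N + g * qq X))"
proof -
  have "ylow eN p = 0" by (auto simp: ylow_def eN_def intro!: sum.neutral)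
  moreover have "(\<Sum>j\<in>{1..N}. eN j * ylow X j) = 0" unfolding sum_eN_mult by simp
  ultimately show ?thesis unfolding sum_gmet_cf_mult by simp
qed

lemma hten_cf_eq_gmet_cf:
  assumes pos: "qq X > 0"
  shows "hten_cf X a b = gmet_cf X a b - Rlow_cf X a * Rlow_cf X b / (J2 X * BB X)"
proof -
  have "gmet_cf X a b - Rlow_cf X a * Rlow_cf X b / (J2 X * BB X)
      = J2 X * (rext b a - qgrad X a * qgrad X b + BB X * mvec X a * mvec X b)"
    unfolding gmet_cf_def Rlow_cf_def ylow_eq_qq_qgrad[OF pos]
    by (rule angular_metric_identity)
      (use pos BB_pos[OF pos] J2_pos[of X] in \<open>simp_all add: fB_def mvec_def\<close>)
  then show ?thesis by (simp add: hten_cf_def rho_def rext_sym[of b a])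
qed

lemma hten_cf_sym: "hten_cf X a b = hten_cf X b a"
  by (simp add: hten_cf_def rho_def rext_sym[of a b] mult_ac)

lemma gmet_cf_sym:
  assumes "qq X > 0"
  shows "gmet_cf X p j = gmet_cf X j p"
  using hten_cf_eq_gmet_cf[OF assms, of p j] hten_cf_eq_gmet_cf[OF assms, of j p] hten_cf_sym[of X p j]
  by (simp add: algebra_simps)

lemma gmet_cf_contract_point:
  assumes pos: "qq X > 0"
  shows "(\<Sum>j\<in>{1..N}. gmet_cf X p j * X j) = Rlow_cf X p"
proof -
  have "(\<Sum>j\<in>{1..N}. X j * ylow X j) = (qq X)\<^sup>2"
    unfolding sum_mult_ylow_self quad_eq_qq_sq[OF pos] ..
  then show ?thesis
    unfolding sum_gmet_cf_mult Rlow_cf_def mvec_def using pos BB_pos[OF pos]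
    by (simp add: fB_def ylow_eq_qq_qgrad field_simps power2_eq_square)
qed

lemma Rlow_cf_contract_point:
  assumes pos: "qq X > 0"
  shows "(\<Sum>t\<in>{1..N}. Rlow_cf X t * X t) = J2 X * BB X"
proof -
  have "(\<Sum>t\<in>{1..N}. Rlow_cf X t * X t)
      = J2 X * ((\<Sum>t\<in>{1..N}. X t * ylow X t) + (X N + g * qq X) * (\<Sum>t\<in>{1..N}. eN t * X t))"
    unfolding Rlow_cf_def by (simp add: sum_distrib_left sum.distrib algebra_simps)
  also have "\<dots> = J2 X * BB X"
    unfolding sum_eN_mult sum_mult_ylow_self quad_eq_qq_sq[OF pos]
    by (simp add: fB_def power2_eq_square algebra_simps)
  finally show ?thesis .
qed

lemma mvec_contract_point:
  assumes pos: "qq X > 0"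
  shows "(\<Sum>t\<in>{1..N}. mvec X t * X t) = 0"
proof -
  have "mvec X t * X t = (qq X * eN t * X t - X N * (X t * qgrad X t)) / BB X" for t
    by (simp add: mvec_def algebra_simps diff_divide_distrib)
  then have "(\<Sum>t\<in>{1..N}. mvec X t * X t)
      = (qq X * (\<Sum>t\<in>{1..N}. eN t * X t) - X N * (\<Sum>t\<in>{1..N}. X t * qgrad X t)) / BB X"
    by (simp only: sum_diff_scaled_divide sum_distrib_left mult.assoc)
  also have "\<dots> = 0" unfolding sum_eN_mult sum_mult_qgrad_self[OF pos] by simp
  finally show ?thesis .
qed

lemma sum_mvec_up_mult:
  "(\<Sum>t\<in>{1..N}. mvec_up X t * v t)
     = (v N - (X N + g * qq X) / BB X * (\<Sum>t\<in>{1..N}. v t * X t)) / (J2 X * qq X)"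
proof -
  have "mvec_up X t * v t = (eN t * v t - (X N + g * qq X) / BB X * (v t * X t)) / (J2 X * qq X)" for t
    by (simp add: mvec_up_def algebra_simps diff_divide_distrib)
  then show ?thesis by (simp only: sum_diff_scaled_divide sum_eN_mult)
qed

lemma mvec_up_contract_mvec:
  assumes pos: "qq X > 0"
  shows "(\<Sum>t\<in>{1..N}. mvec_up X t * mvec X t) = 1 / (J2 X * BB X)"
  unfolding sum_mvec_up_mult mvec_contract_point[OF pos]
  using pos BB_pos[OF pos] J2_pos[of X] by (simp add: mvec_def)

lemma mvec_up_contract_Rlow_cf:
  assumes pos: "qq X > 0"
  shows "(\<Sum>t\<in>{1..N}. mvec_up X t * Rlow_cf X t) = 0"
  unfolding sum_mvec_up_mult Rlow_cf_contract_point[OF pos]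
  using pos BB_pos[OF pos] J2_pos[of X] by (simp add: Rlow_cf_def)

lemma gmet_cf_contract_mvec_up:
  assumes pos: "qq X > 0"
  shows "(\<Sum>j\<in>{1..N}. gmet_cf X p j * mvec_up X j) = mvec X p"
proof -
  have "(\<Sum>j\<in>{1..N}. gmet_cf X p j * mvec_up X j) =
     ((\<Sum>j\<in>{1..N}. gmet_cf X p j * eN j) - (X N + g * qq X) / BB X * (\<Sum>j\<in>{1..N}. gmet_cf X p j * X j))
     / (J2 X * qq X)"
  proof -
    have "gmet_cf X p j * mvec_up X j
        = (gmet_cf X p j * eN j - (X N + g * qq X) / BB X * (gmet_cf X p j * X j)) / (J2 X * qq X)" for j
      by (simp add: mvec_up_def algebra_simps diff_divide_distrib)
    then show ?thesis by (simp only: sum_diff_scaled_divide)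
  qed
  also have "\<dots> = mvec X p"
    unfolding gmet_cf_contract_eN gmet_cf_contract_point[OF pos] Rlow_cf_def ylow_eq_qq_qgrad[OF pos]
    by (rule raised_mvec_identity)
      (use pos BB_pos[OF pos] J2_pos[of X] in \<open>simp_all add: fB_def mvec_def\<close>)
  finally show ?thesis .
qed

lemma gmet_cf_kernel:
  assumes pos: "qq X > 0" and v: "\<forall>p\<in>{1..N}. (\<Sum>j\<in>{1..N}. gmet_cf X p j * v j) = 0"
  shows "v N = 0" and "\<forall>p\<in>{1..N}. ylow v p = 0"
proof -
  define S where "S = (\<Sum>j\<in>{1..N}. v j * ylow X j)"
  define Z where "Z = X N"
  define c where "c = g * v N - g * Z * (S + (Z + g * qq X) * v N) / BB X"
  have BB: "BB X > 0" using BB_pos[OF pos] .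
  have e: "ylow v p + (eN p + g * qgrad X p) * v N + g * mvec X p * (S + (Z + g * qq X) * v N) = 0"
    if "p \<in> {1..N}" for p
    using v that sum_gmet_cf_mult[of X p v] J2_pos[of X] by (simp add: S_def Z_def)
  have e_N: "v N + g * (qq X / BB X) * (S + (Z + g * qq X) * v N) = 0"
    using e[of N] N_ge_2 by (simp add: mvec_def)
  have ylow_v: "ylow v p = - qgrad X p * c" if p: "p \<in> {1..N}" for p
  proof (cases "p = N")
    case False
    then have "eN p = 0" by (simp add: eN_def)
    then show ?thesis using e[OF p] BB unfolding c_def mvec_def Z_def by (simp add: field_simps)
  qed simp
  have "S = (\<Sum>p\<in>{1..N}. X p * ylow v p)"
    unfolding S_def by (rule sum_mult_ylow_swap)
  also have "\<dots> = (\<Sum>p\<in>{1..N}. - c * (X p * qgrad X p))"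
    by (rule sum.cong) (auto simp: ylow_v)
  also have "\<dots> = - c * qq X"
    unfolding sum_distrib_left[symmetric] sum_mult_qgrad_self[OF pos] ..
  finally have S_eq: "S = - c * qq X" .
  have "v N = 0 \<and> S = 0"
  proof (rule metric_kernel_system_trivial[where B = "BB X" and Z = Z and g = g and q = "qq X"])
    show "BB X = Z\<^sup>2 + g * qq X * Z + (qq X)\<^sup>2" by (simp add: fB_def Z_def)
    show "BB X \<noteq> 0" "qq X \<noteq> 0" using BB pos by auto
    show "v N * BB X + g * qq X * (S + (Z + g * qq X) * v N) = 0"
      using e_N BB by (simp add: field_simps)
    show "S * BB X + qq X * (g * v N * BB X - g * Z * (S + (Z + g * qq X) * v N)) = 0"
      using S_eq BB unfolding c_def by (simp add: field_simps)
  qed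
  then show "v N = 0" and "\<forall>p\<in>{1..N}. ylow v p = 0"
    using ylow_v by (simp_all add: c_def)
qed

lemma gmet_cf_injective:
  assumes "qq X > 0" and "\<forall>p\<in>{1..N}. (\<Sum>j\<in>{1..N}. gmet_cf X p j * v j) = 0"
  shows "\<forall>j\<in>{1..N}. v j = 0"
proof -
  have "(\<Sum>a\<in>{1..<N}. \<Sum>b\<in>{1..<N}. rr a b * v a * v b) = (\<Sum>p\<in>{1..N}. v p * ylow v p)"
    by (rule sum_mult_ylow[symmetric])
  also have "\<dots> = 0" using gmet_cf_kernel(2)[OF assms] by simp
  finally have "\<forall>a\<in>{1..<N}. v a = 0" using rr_pos_def by force
  then show ?thesis using gmet_cf_kernel(1)[OF assms] by (auto simp: le_less)
qed

lemma ginv_left_inverse: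
  assumes pos: "qq X > 0"
  shows "\<forall>p\<in>{1..N}. \<forall>s\<in>{1..N}.
           (\<Sum>q\<in>{1..N}. ginv N rr g X p q * gmet_cf X q s) = (if p = s then 1 else 0)"
proof -
  have gm: "gmet N rr g p j X = gmet_cf X p j" if "p \<in> {1..N}" "j \<in> {1..N}" for p j
    using gmet_eq[OF pos that] .
  have inj: "\<forall>q\<in>{1..N}. v q = 0" if "\<forall>p\<in>{1..N}. (\<Sum>q\<in>{1..N}. gmet N rr g p q X * v q) = 0" for v
    using gmet_cf_injective[OF pos] that by (simp add: gm)
  obtain E
    where right: "\<forall>p\<in>{1..N}. \<forall>s\<in>{1..N}. (\<Sum>q\<in>{1..N}. gmet N rr g p q X * E q s) = (if p = s then 1 else 0)"
      and left: "\<forall>p\<in>{1..N}. \<forall>s\<in>{1..N}. (\<Sum>q\<in>{1..N}. E p q * gmet N rr g q s X) = (if p = s then 1 else 0)"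
      and outside: "\<forall>p q. p \<notin> {1..N} \<or> q \<notin> {1..N} \<longrightarrow> E p q = 0"
    by (rule matrix_inverse_exists[OF inj])
  have "ginv N rr g X = E"
    unfolding ginv_def
  proof (rule the_equality)
    fix M
    assume M: "(\<forall>p\<in>{1..N}. \<forall>s\<in>{1..N}. (\<Sum>q\<in>{1..N}. gmet N rr g p q X * M q s) = (if p = s then 1 else 0))
      \<and> (\<forall>p q. p \<notin> {1..N} \<or> q \<notin> {1..N} \<longrightarrow> M p q = 0)"
    show "M = E"
    proof (intro ext)
      fix p s
      show "M p s = E p s"
        using right_inverse_eq_left_inverse[OF finite_atLeastAtMost _ _ left, of p s M] M outside
        by (cases "p \<in> {1..N} \<and> s \<in> {1..N}") auto
    qed
  qed (use right outside in blast)
  moreover have "(\<Sum>q\<in>{1..N}. E p q * gmet_cf X q s) = (\<Sum>q\<in>{1..N}. E p q * gmet N rr g q s X)"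
    if "s \<in> {1..N}" for p s
    using that by (intro sum.cong) (auto simp: gm)
  ultimately show ?thesis using left by simp
qed

lemma ginv_contract_hten_cf:
  assumes pos: "qq X > 0" and "t \<in> {1..N}" "s \<in> {1..N}"
  shows "(\<Sum>u\<in>{1..N}. ginv N rr g X t u * hten_cf X u s)
           = (if t = s then 1 else 0) - X t * (Rlow_cf X s / (J2 X * BB X))"
proof -
  let ?E = "ginv N rr g X"
  have "(\<Sum>u\<in>{1..N}. ?E t u * hten_cf X u s)
      = (\<Sum>u\<in>{1..N}. ?E t u * gmet_cf X u s - Rlow_cf X s / (J2 X * BB X) * (?E t u * Rlow_cf X u))"
    by (simp add: hten_cf_eq_gmet_cf[OF pos] algebra_simps)
  also have "\<dots> = (\<Sum>u\<in>{1..N}. ?E t u * gmet_cf X u s)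
      - Rlow_cf X s / (J2 X * BB X) * (\<Sum>u\<in>{1..N}. ?E t u * Rlow_cf X u)"
    by (simp only: sum_subtractf sum_distrib_left)
  also have "(\<Sum>u\<in>{1..N}. ?E t u * Rlow_cf X u) = (\<Sum>u\<in>{1..N}. ?E t u * (\<Sum>j\<in>{1..N}. gmet_cf X u j * X j))"
    by (simp only: gmet_cf_contract_point[OF pos])
  also have "\<dots> = X t"
    by (rule left_inverse_apply[OF finite_atLeastAtMost \<open>t \<in> {1..N}\<close> ginv_left_inverse[OF pos]])
  finally show ?thesis using ginv_left_inverse[OF pos] assms(2,3) by simp
qed

lemma ginv_contract_mvec:
  assumes pos: "qq X > 0" and "t \<in> {1..N}"
  shows "(\<Sum>u\<in>{1..N}. ginv N rr g X t u * mvec X u) = mvec_up X t"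
proof -
  have "(\<Sum>u\<in>{1..N}. ginv N rr g X t u * mvec X u)
      = (\<Sum>u\<in>{1..N}. ginv N rr g X t u * (\<Sum>j\<in>{1..N}. gmet_cf X u j * mvec_up X j))"
    by (simp only: gmet_cf_contract_mvec_up[OF pos])
  also have "\<dots> = mvec_up X t"
    by (rule left_inverse_apply[OF finite_atLeastAtMost \<open>t \<in> {1..N}\<close> ginv_left_inverse[OF pos]])
  finally show ?thesis .
qed

lemma mvec_up_contract_hten_cf:
  assumes pos: "qq X > 0" and "s \<in> {1..N}"
  shows "(\<Sum>t\<in>{1..N}. mvec_up X t * hten_cf X t s) = mvec X s"
proof -
  have "(\<Sum>t\<in>{1..N}. mvec_up X t * hten_cf X t s)
      = (\<Sum>t\<in>{1..N}. gmet_cf X s t * mvec_up X t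
           - Rlow_cf X s / (J2 X * BB X) * (mvec_up X t * Rlow_cf X t))"
    by (simp add: hten_cf_eq_gmet_cf[OF pos] gmet_cf_sym[OF pos, of _ s] algebra_simps)
  also have "\<dots> = (\<Sum>t\<in>{1..N}. gmet_cf X s t * mvec_up X t)
      - Rlow_cf X s / (J2 X * BB X) * (\<Sum>t\<in>{1..N}. mvec_up X t * Rlow_cf X t)"
    by (simp only: sum_subtractf sum_distrib_left)
  finally show ?thesis
    by (simp only: gmet_cf_contract_mvec_up[OF pos] mvec_up_contract_Rlow_cf[OF pos] mult_zero_right diff_zero)
qed

lemma point_contract_hten_cf:
  assumes pos: "qq X > 0" and "s \<in> {1..N}"
  shows "(\<Sum>t\<in>{1..N}. X t * hten_cf X t s) = 0"
proof -
  have "(\<Sum>t\<in>{1..N}. X t * hten_cf X t s)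
      = (\<Sum>t\<in>{1..N}. gmet_cf X s t * X t - Rlow_cf X s / (J2 X * BB X) * (Rlow_cf X t * X t))"
    by (simp add: hten_cf_eq_gmet_cf[OF pos] gmet_cf_sym[OF pos, of _ s] algebra_simps)
  also have "\<dots> = (\<Sum>t\<in>{1..N}. gmet_cf X s t * X t)
      - Rlow_cf X s / (J2 X * BB X) * (\<Sum>t\<in>{1..N}. Rlow_cf X t * X t)"
    by (simp only: sum_subtractf sum_distrib_left)
  finally show ?thesis
    unfolding gmet_cf_contract_point[OF pos] Rlow_cf_contract_point[OF pos]
    using BB_pos[OF pos] J2_pos[of X] by simp
qed

lemma hten_eq: "qq X > 0 \<Longrightarrow> a \<in> {1..N} \<Longrightarrow> b \<in> {1..N} \<Longrightarrow> hten N rr g a b X = hten_cf X a b"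
  by (simp add: hten_def gmet_eq Rlow_eq hten_cf_eq_gmet_cf fK2_eq[unfolded fK2_def])

lemma Cartan_eq_cartan_shape:
  "qq X > 0 \<Longrightarrow> p \<in> {1..N} \<Longrightarrow> j \<in> {1..N} \<Longrightarrow> r \<in> {1..N} \<Longrightarrow>
    Cartan N rr g p j r X = cartan_shape (g/2) (- (g/2) * (J2 X * BB X)) (mvec X) (hten_cf X) p j r"
  by (simp add: Cartan_eq cartan_cf_def cartan_shape_def hten_cf_def algebra_simps)

lemma Scurv_eq:
  assumes pos: "qq X > 0" and "p \<in> {1..N}" "q \<in> {1..N}" "r \<in> {1..N}" "s \<in> {1..N}"
  shows "Scurv N rr g p q r s X = - (g\<^sup>2 / 4) * (hten N rr g p r X * hten N rr g q s X
                                  - hten N rr g p s X * hten N rr g q r X) / (fK N rr g X)\<^sup>2"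
proof -
  let ?I = "{1..N}" and ?E = "ginv N rr g X" and ?h = "hten_cf X" and ?K2 = "J2 X * BB X"
  let ?C = "cartan_shape (g/2) (- (g/2) * ?K2) (mvec X) ?h"
  have "Scurv N rr g p q r s X = (\<Sum>t\<in>?I. ?C t q r * (\<Sum>u\<in>?I. ?E t u * ?C p u s)
                                   - ?C t q s * (\<Sum>u\<in>?I. ?E t u * ?C p u r))"
    using assms by (auto simp: Scurv_def Cmixed_def Cartan_eq_cartan_shape intro!: sum.cong)
  also have "\<dots> = - ((g/2)\<^sup>2 * (1 / ?K2)) * (?h p r * ?h q s - ?h p s * ?h q r)"
  proof (rule curvature_of_cartan_shape[where X = X and l = "\<lambda>s. Rlow_cf X s / ?K2" and mu = "mvec_up X"])
    show "\<forall>a\<in>?I. \<forall>b\<in>?I. ?h a b = ?h b a"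
      using hten_cf_sym by blast
    show "\<forall>t\<in>?I. \<forall>s\<in>?I. (\<Sum>u\<in>?I. ?E t u * ?h u s) = (if t = s then 1 else 0) - X t * (Rlow_cf X s / ?K2)"
      using ginv_contract_hten_cf[OF pos] by blast
    show "\<forall>t\<in>?I. (\<Sum>u\<in>?I. ?E t u * mvec X u) = mvec_up X t"
      using ginv_contract_mvec[OF pos] by blast
    show "\<forall>s\<in>?I. (\<Sum>t\<in>?I. mvec_up X t * ?h t s) = mvec X s"
      using mvec_up_contract_hten_cf[OF pos] by blast
    show "\<forall>s\<in>?I. (\<Sum>t\<in>?I. X t * ?h t s) = 0"
      using point_contract_hten_cf[OF pos] by blast
    show "(\<Sum>t\<in>?I. mvec X t * X t) = 0"
      by (rule mvec_contract_point[OF pos])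
    show "1 / ?K2 = (\<Sum>t\<in>?I. mvec_up X t * mvec X t)"
      by (rule mvec_up_contract_mvec[OF pos, symmetric])
    show "g / 2 + - (g / 2) * ?K2 * (1 / ?K2) = 0"
      using BB_pos[OF pos] J2_pos[of X] by simp
  qed (use assms in simp_all)
  finally show ?thesis
    using assms unfolding fK2_eq[unfolded fK2_def] by (simp add: hten_eq power2_eq_square)
qed

end

theorem theorem2p2:
  fixes N :: nat and rr :: "nat \<Rightarrow> nat \<Rightarrow> real" and g :: real and R :: "nat \<Rightarrow> real"
  assumes "N \<ge> 2"
    and "\<forall>a\<in>{1..<N}. \<forall>b\<in>{1..<N}. rr a b = rr b a"
    and "\<forall>x :: nat \<Rightarrow> real. (\<exists>a\<in>{1..<N}. x a \<noteq> 0) \<longrightarrow>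
           (\<Sum>a\<in>{1..<N}. \<Sum>b\<in>{1..<N}. rr a b * x a * x b) > 0"
    and "-2 < g" and "g < 2"
    and "fq N rr R > 0"
  shows "\<forall>p\<in>{1..N}. \<forall>q\<in>{1..N}. \<forall>r\<in>{1..N}. \<forall>s\<in>{1..N}.
           Scurv N rr g p q r s R =
             (- (g^2 / 4)) * (hten N rr g p r R * hten N rr g q s R
                              - hten N rr g p s R * hten N rr g q r R) / (fK N rr g R)^2"
proof -
  interpret finsleroid N rr g using assms(1-5) by unfold_locales
  show ?thesis using Scurv_eq[OF assms(6)] by blast
qed

end
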